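(* Let $k \in \mathbb{N}$. The set of $\mathcal{P}$-positions of the Wythoff variant with terminal set $T_k = \{(x,y) \in \mathbb{Z}_{\ge 0}^2 : x+y \le k\}$ is exactly $P_k = T_k \cup \{(b_n,a_n) : n \in \mathbb{N}\} \cup \{(a_n,b_n) : n \in \mathbb{N}\}$.
   Context: Positions are pairs $(x,y) \in \mathbb{Z}_{\ge 0}^2$. In the Wythoff variant with terminal set $T_k$, from a position $(x,y) \notin T_k$ a move goes to any position in $\{(u,y) : 0 \le u < x\} \cup \{(x,v) : 0 \le v < y\} \cup \{(x-t,y-t) : 1 \le t \le \min(x,y)\}$ (horizontal, vertical, and diagonal queen moves); positions in $T_k$ have no moves. Players alternate; a player with no move loses (the player who moves into $T_k$ wins). A $\mathcal{P}$-position is one from which the previous player wins with optimal play; equivalently a position is $\mathcal{P}$ iff every move from it leads to a non-$\mathcal{P}$ position. Sequences: Fibonacci numbers $F_1 = F_2 = 1$, $F_{i+2} = F_{i+1} + F_i$. Let $\sigma$ be the substitution on finite sequences over $\{1,2\}$ replacing each entry $1$ by $2$ and each entry $2$ by $2,1$. Let $C_{1,1} = (1)$, $C_{i+1,1} = \sigma(C_{i,1})$. For $i \in \mathbb{N}$ let $C_i^{(k)}$ be the concatenation of $k$ copies of $C_{i,1}$. Let $(c_n)_{n \in \mathbb{N}}$ be the concatenation of $C_1^{(k)}, C_2^{(k)}, C_3^{(k)}, \dots$ in order, $d_n = c_n + 1$, $a_1 = k+1$, $a_n = k+1 + \sum_{i=1}^{n-1} c_i$, $b_1 = 2k+2$,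 $b_n = 2k+2 + \sum_{i=1}^{n-1} d_i$. *)

theory Defs imports Main begin

definition Tset :: "nat \<Rightarrow> (nat \<times> nat) set" where
  "Tset k = {(x, y). x + y \<le> k}"

definition moves :: "nat \<Rightarrow> nat \<Rightarrow> nat \<Rightarrow> (nat \<times> nat) set" where
  "moves k x y = (if (x, y) \<in> Tset k then {} else
     {(u, y) | u. u < x} \<union> {(x, v) | v. v < y} \<union>
     {(x - t, y - t) | t. 1 \<le> t \<and> t \<le> min x y})"

lemma moves_decrease: "(u, v) \<in> moves k x y \<Longrightarrow> u + v < x + y"
  by (auto simp: moves_def split: if_splits)

function isP :: "nat \<Rightarrow> nat \<Rightarrow> nat \<Rightarrow> bool" where
  "isP k x y = (\<forall>p \<in> moves k x y. \<not> isP k (fst p) (snd p))"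
  by auto
termination
  by (relation "measure (\<lambda>(k, x, y). x + y)")
     (auto dest: moves_decrease)

declare isP.simps [simp del]

definition sigma :: "nat list \<Rightarrow> nat list" where
  "sigma xs = concat (map (\<lambda>a. if a = 1 then [2] else if a = 2 then [2, 1] else [a]) xs)"

text \<open>Cw i = C_{i+1,1} (shifted to 0-based index).\<close>
fun Cw :: "nat \<Rightarrow> nat list" where
  "Cw 0 = [1]"
| "Cw (Suc i) = sigma (Cw i)"

text \<open>block k i = C_{i+1}^{(k)}: k copies of C_{i+1,1}.\<close>
definition block :: "nat \<Rightarrow> nat \<Rightarrow> nat list" where
  "block k i = concat (replicate k (Cw i))"

definition prefix_blocks :: "nat \<Rightarrow> nat \<Rightarrow> nat list" where
  "prefix_blocks k m = concat (map (block k) [0..<m])"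

text \<open>c_n (1-indexed) is the n-th entry of the infinite concatenation.  For k \<ge> 1
  every block is nonempty, so the first n blocks already contain at least n entries.\<close>
definition cseq :: "nat \<Rightarrow> nat \<Rightarrow> nat" where
  "cseq k n = prefix_blocks k n ! (n - 1)"

definition dseq :: "nat \<Rightarrow> nat \<Rightarrow> nat" where
  "dseq k n = cseq k n + 1"

definition aseq :: "nat \<Rightarrow> nat \<Rightarrow> nat" where
  "aseq k n = k + 1 + (\<Sum>i = 1..<n. cseq k i)"

definition bseq :: "nat \<Rightarrow> nat \<Rightarrow> nat" where
  "bseq k n = 2 * k + 2 + (\<Sum>i = 1..<n. dseq k i)"

end

theory Submission imports Defs begin

text \<open>
  The prefixes W(m) = C_1^(k) ... C_m^(k) of the word c = c_1 c_2 ... satisfy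
  W(m+1) = 1^k sigma(W(m)), so c is the fixed point c = 1^k sigma(c). Since sigma(w) has length
  equal to the weight of w, the letters of c at positions a_n, ..., a_n + c_n - 1 spell sigma(c_n),
  and a_(a_n) + 1 = b_n. These two facts make a and b complementary on {k+1, k+2, ...}, with
  b_n - a_n = k + n.
  The Wythoff argument then goes through: a queen move keeps one coordinate or the difference of
  the coordinates, and each of these determines a pair (a_n, b_n) or (b_n, a_n), so no move joins
  two positions of P_k; conversely from any other position one can move into T_k or onto a pair.
\<close>

section \<open>The substitution sigma\<close>

lemma sigma_Nil [simp]: "sigma [] = []"
  by (simp add: sigma_def)

lemma sigma_Cons [simp]:
  "sigma (x # xs) = (if x = 1 then [2] else if x = 2 then [2, 1] else [x]) @ sigma xs"
  by (simp add: sigma_def)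

lemma sigma_append [simp]: "sigma (xs @ ys) = sigma xs @ sigma ys"
  by (simp add: sigma_def)

lemma sigma_concat: "sigma (concat xss) = concat (map sigma xss)"
  by (induction xss) auto

lemma set_sigma_subset: "set xs \<subseteq> {1, 2} \<Longrightarrow> set (sigma xs) \<subseteq> {1, 2}"
  by (induction xs) auto

lemma length_sigma: "set xs \<subseteq> {1, 2} \<Longrightarrow> length (sigma xs) = sum_list xs"
  by (induction xs) auto

lemma sum_list_sigma: "set xs \<subseteq> {1, 2} \<Longrightarrow> sum_list (sigma xs) = sum_list xs + length xs"
  by (induction xs) auto

lemma length_le_sum_list: "set xs \<subseteq> {1, 2} \<Longrightarrow> length xs \<le> sum_list xs"
  by (induction xs) auto

lemma take_sigma_sum_list_take:
  assumes "set xs \<subseteq> {1, 2}"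
  shows "take (sum_list (take j xs)) (sigma xs) = sigma (take j xs)"
proof -
  have "set (take j xs) \<subseteq> {1, 2}"
    using assms set_take_subset by fastforce
  then have "length (sigma (take j xs)) = sum_list (take j xs)"
    by (rule length_sigma)
  then show ?thesis
    by (metis append_eq_conv_conj append_take_drop_id sigma_append)
qed

lemma nth_sigma_sum_list_take:
  assumes "set xs \<subseteq> {1, 2}" "j < length xs" "i < xs ! j"
  shows "sum_list (take j xs) + i < sum_list xs"
    and "sigma xs ! (sum_list (take j xs) + i) = sigma [xs ! j] ! i"
proof -
  have split: "xs = take j xs @ xs ! j # drop (Suc j) xs"
    using assms(2) by (rule id_take_nth_drop)
  have "set (take j xs) \<subseteq> {1, 2}" and "xs ! j \<in> {1, 2}"
    using assms(1,2) set_take_subset nth_mem by fastforce+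
  then have "length (sigma (take j xs)) = sum_list (take j xs)"
    and "length (sigma [xs ! j]) = xs ! j"
    by (auto simp: length_sigma)
  moreover have "sigma xs = sigma (take j xs) @ sigma [xs ! j] @ sigma (drop (Suc j) xs)"
    by (subst split) simp
  moreover have "sum_list xs = sum_list (take j xs) + xs ! j + sum_list (drop (Suc j) xs)"
    by (subst split) simp
  ultimately show "sum_list (take j xs) + i < sum_list xs"
    and "sigma xs ! (sum_list (take j xs) + i) = sigma [xs ! j] ! i"
    using assms(3) by (auto simp: nth_append)
qed

section \<open>The word c and the sequences a and b\<close>

lemma set_Cw_subset: "set (Cw i) \<subseteq> {1, 2}"
  by (induction i) (simp_all only: Cw.simps set_sigma_subset, simp)

lemma block_0: "block k 0 = replicate k 1"
  by (induction k) (auto simp: block_def)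

lemma block_Suc: "block k (Suc i) = sigma (block k i)"
  by (simp add: block_def sigma_concat map_replicate)

lemma prefix_blocks_Suc: "prefix_blocks k (Suc m) = replicate k 1 @ sigma (prefix_blocks k m)"
proof (induction m)
  case 0
  then show ?case by (simp add: prefix_blocks_def block_0)
next
  case (Suc m)
  have "prefix_blocks k (Suc (Suc m)) = prefix_blocks k (Suc m) @ block k (Suc m)"
    by (simp add: prefix_blocks_def)
  also have "\<dots> = replicate k 1 @ sigma (prefix_blocks k m @ block k m)"
    using Suc by (simp add: block_Suc)
  also have "prefix_blocks k m @ block k m = prefix_blocks k (Suc m)"
    by (simp add: prefix_blocks_def)
  finally show ?case .
qed

lemma set_prefix_blocks_subset: "set (prefix_blocks k m) \<subseteq> {1, 2}"
  using set_Cw_subset by (fastforce simp: prefix_blocks_def block_def)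

lemma prefix_blocks_append:
  "m \<le> n \<Longrightarrow> prefix_blocks k n = prefix_blocks k m @ concat (map (block k) [m..<n])"
  by (metis le_add_diff_inverse map_append concat_append prefix_blocks_def upt_add_eq_append zero_le)

lemma aseq_Suc: "1 \<le> n \<Longrightarrow> aseq k (Suc n) = aseq k n + cseq k n"
  by (simp add: aseq_def)

lemma aseq_gt: "k < aseq k n"
  by (simp add: aseq_def)

lemma bseq_eq:
  assumes "1 \<le> n"
  shows "bseq k n = aseq k n + k + n"
proof -
  have "(\<Sum>i = 1..<n. dseq k i) = (\<Sum>i = 1..<n. cseq k i) + (n - 1)"
    unfolding dseq_def sum.distrib by simp
  with assms show ?thesis
    by (simp add: aseq_def bseq_def)
qed

locale wythoff_variant =
  fixes k :: nat
  assumes k_pos: "1 \<le> k"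
begin

lemma length_prefix_blocks_ge: "m \<le> length (prefix_blocks k m)"
proof (induction m)
  case 0
  then show ?case by simp
next
  case (Suc m)
  have "length (prefix_blocks k (Suc m)) = k + sum_list (prefix_blocks k m)"
    by (simp add: prefix_blocks_Suc length_sigma[OF set_prefix_blocks_subset])
  then show ?case
    using Suc k_pos length_le_sum_list[OF set_prefix_blocks_subset, of k m] by simp
qed

lemma cseq_Suc_eq_nth:
  assumes "j < length (prefix_blocks k N)"
  shows "cseq k (Suc j) = prefix_blocks k N ! j"
proof (cases "Suc j \<le> N")
  case True
  have "j < length (prefix_blocks k (Suc j))"
    using length_prefix_blocks_ge[of "Suc j"] by simp
  then show ?thesis
    using prefix_blocks_append[OF True] by (simp add: cseq_def nth_append)
next
  case False
  then show ?thesis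
    using prefix_blocks_append[of N "Suc j" k] assms by (simp add: cseq_def nth_append)
qed

lemma cseq_mem:
  assumes "1 \<le> n"
  shows "cseq k n \<in> {1, 2}"
proof -
  have "n - 1 < length (prefix_blocks k n)"
    using assms length_prefix_blocks_ge[of n] by simp
  then show ?thesis
    using assms cseq_Suc_eq_nth[of "n - 1" n] set_prefix_blocks_subset[of k n]
    by (metis Suc_diff_1 in_mono less_le_trans nth_mem zero_less_one)
qed

lemma cseq_initial: "1 \<le> n \<Longrightarrow> n \<le> k \<Longrightarrow> cseq k n = 1"
  using cseq_Suc_eq_nth[of "n - 1" 1]
  by (cases n) (simp_all add: prefix_blocks_def block_0)

lemma aseq_Suc_eq_sum_list_take:
  "m \<le> length (prefix_blocks k N) \<Longrightarrow> aseq k (Suc m) = k + 1 + sum_list (take m (prefix_blocks k N))"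
proof (induction m)
  case 0
  then show ?case by (simp add: aseq_def)
next
  case (Suc m)
  then have "cseq k (Suc m) = prefix_blocks k N ! m"
    by (simp add: cseq_Suc_eq_nth)
  with Suc show ?case
    by (simp add: aseq_def take_Suc_conv_app_nth)
qed

lemma cseq_aseq_add:
  assumes "1 \<le> n" "i < cseq k n"
  shows "cseq k (aseq k n + i) = sigma [cseq k n] ! i"
proof -
  define W where "W = prefix_blocks k n"
  define j where "j = n - 1"
  have W_letters: "set W \<subseteq> {1, 2}"
    unfolding W_def by (rule set_prefix_blocks_subset)
  have j: "j < length W"
    using assms(1) length_prefix_blocks_ge[of n] unfolding W_def j_def by simp
  have cn: "cseq k n = W ! j"
    using assms(1) cseq_Suc_eq_nth[OF j[unfolded W_def]] unfolding W_def j_def by simp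
  have an: "aseq k n = Suc (k + sum_list (take j W))"
    using assms(1) aseq_Suc_eq_sum_list_take[of j n] j unfolding W_def j_def by simp
  have W_Suc: "prefix_blocks k (Suc n) = replicate k 1 @ sigma W"
    unfolding W_def by (rule prefix_blocks_Suc)
  have "sum_list (take j W) + i < sum_list W"
    and image: "sigma W ! (sum_list (take j W) + i) = sigma [W ! j] ! i"
    using nth_sigma_sum_list_take[OF W_letters j] assms(2) cn by simp_all
  then have "k + sum_list (take j W) + i < length (prefix_blocks k (Suc n))"
    using W_Suc length_sigma[OF W_letters] by simp
  then have "cseq k (aseq k n + i) = prefix_blocks k (Suc n) ! (k + sum_list (take j W) + i)"
    using an cseq_Suc_eq_nth by simp
  also have "\<dots> = sigma W ! (sum_list (take j W) + i)"
    using W_Suc by (simp add: nth_append)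
  finally show ?thesis
    using image cn by simp
qed

lemma cseq_aseq: "1 \<le> n \<Longrightarrow> cseq k (aseq k n) = 2"
  using cseq_aseq_add[of n 0] cseq_mem[of n] by auto

lemma cseq_Suc_aseq: "1 \<le> n \<Longrightarrow> cseq k n = 2 \<Longrightarrow> cseq k (Suc (aseq k n)) = 1"
  using cseq_aseq_add[of n 1] by simp

lemma Suc_aseq_aseq:
  assumes "1 \<le> n"
  shows "Suc (aseq k (aseq k n)) = bseq k n"
proof -
  define W where "W = prefix_blocks k n"
  define j where "j = n - 1"
  define s where "s = sum_list (take j W)"
  have W_letters: "set W \<subseteq> {1, 2}"
    unfolding W_def by (rule set_prefix_blocks_subset)
  have j: "j < length W"
    using assms length_prefix_blocks_ge[of n] unfolding W_def j_def by simp
  have an: "aseq k n = Suc (k + s)"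
    using assms aseq_Suc_eq_sum_list_take[of j n] j unfolding W_def j_def s_def by simp
  have W_Suc: "prefix_blocks k (Suc n) = replicate k 1 @ sigma W"
    unfolding W_def by (rule prefix_blocks_Suc)
  have "0 < W ! j"
    using W_letters j nth_mem by fastforce
  then have "s < sum_list W"
    using nth_sigma_sum_list_take(1)[OF W_letters j, of 0] unfolding s_def by simp
  then have "k + s \<le> length (prefix_blocks k (Suc n))"
    using W_Suc length_sigma[OF W_letters] by simp
  then have "aseq k (aseq k n) = k + 1 + sum_list (take (k + s) (prefix_blocks k (Suc n)))"
    using an aseq_Suc_eq_sum_list_take by simp
  also have "take (k + s) (prefix_blocks k (Suc n)) = replicate k 1 @ sigma (take j W)"
    using W_Suc take_sigma_sum_list_take[OF W_letters] unfolding s_def by simp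
  also have "sum_list \<dots> = k + s + j"
    using sum_list_sigma[of "take j W"] W_letters set_take_subset j
    unfolding s_def by (fastforce simp: sum_list_replicate)
  finally show ?thesis
    using assms an bseq_eq unfolding j_def by simp
qed

lemma aseq_strict_mono: "1 \<le> m \<Longrightarrow> m < n \<Longrightarrow> aseq k m < aseq k n"
proof (induction n)
  case 0
  then show ?case by simp
next
  case (Suc n)
  then have "aseq k n < aseq k (Suc n)"
    using aseq_Suc cseq_mem[of n] by fastforce
  with Suc show ?case
    by (cases "m = n") auto
qed

lemma aseq_less_iff: "1 \<le> m \<Longrightarrow> 1 \<le> n \<Longrightarrow> aseq k m < aseq k n \<longleftrightarrow> m < n"
  using aseq_strict_mono[of m n] aseq_strict_mono[of n m] by (cases m n rule: linorder_cases) auto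

lemma aseq_eq_iff: "1 \<le> m \<Longrightarrow> 1 \<le> n \<Longrightarrow> aseq k m = aseq k n \<longleftrightarrow> m = n"
  using aseq_strict_mono[of m n] aseq_strict_mono[of n m] by (cases m n rule: linorder_cases) auto

lemma bseq_eq_iff: "1 \<le> m \<Longrightarrow> 1 \<le> n \<Longrightarrow> bseq k m = bseq k n \<longleftrightarrow> m = n"
  using aseq_strict_mono[of m n] aseq_strict_mono[of n m] bseq_eq[of m] bseq_eq[of n]
  by (cases m n rule: linorder_cases) auto

lemma aseq_bracket:
  assumes "k < z"
  shows "\<exists>n\<ge>1. aseq k n \<le> z \<and> z < aseq k (Suc n)"
  using assms[folded Suc_le_eq]
proof (induction z rule: nat_induct_at_least)
  case base
  have "aseq k 1 = Suc k"
    by (simp add: aseq_def)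
  with aseq_strict_mono[of 1 2] show ?case
    by (intro exI[of _ 1]) (simp add: numeral_2_eq_2)
next
  case (Suc z)
  then obtain n where n: "1 \<le> n" "aseq k n \<le> z" "z < aseq k (Suc n)"
    by blast
  show ?case
  proof (cases "Suc z < aseq k (Suc n)")
    case True
    with n show ?thesis by auto
  next
    case False
    with n aseq_strict_mono[of "Suc n" "Suc (Suc n)"] show ?thesis
      by (intro exI[of _ "Suc n"]) simp
  qed
qed

lemma aseq_neq_bseq:
  assumes "1 \<le> m" "1 \<le> n"
  shows "aseq k m \<noteq> bseq k n"
proof
  assume eq: "aseq k m = bseq k n"
  have an: "1 \<le> aseq k n"
    using aseq_gt[of k n] by simp
  have "aseq k (Suc (aseq k n)) = aseq k (aseq k n) + 2"
    using aseq_Suc[OF an] cseq_aseq[OF assms(2)] by simp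
  then have "aseq k (aseq k n) < aseq k m" "aseq k m < aseq k (Suc (aseq k n))"
    using eq Suc_aseq_aseq[OF assms(2)] by auto
  then have "aseq k n < m" "m < Suc (aseq k n)"
    using aseq_less_iff an assms(1) by auto
  then show False
    by simp
qed

lemma aseq_or_bseq:
  assumes "k < z"
  shows "\<exists>n\<ge>1. z = aseq k n \<or> z = bseq k n"
proof -
  obtain n where n: "1 \<le> n" "aseq k n \<le> z" "z < aseq k (Suc n)"
    using aseq_bracket assms by auto
  show ?thesis
  proof (cases "z = aseq k n")
    case True
    with n show ?thesis by auto
  next
    case False
    with n aseq_Suc[of n] cseq_mem[of n] have cn: "cseq k n = 2" and z: "z = Suc (aseq k n)"
      by auto
    have "k < n"
      using cseq_initial[OF n(1)] cn by (cases "n \<le> k") auto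
    then obtain m where m: "1 \<le> m" "aseq k m \<le> n" "n < aseq k (Suc m)"
      using aseq_bracket by auto
    show ?thesis
    proof (cases "n = aseq k m")
      case True
      then have "z = bseq k m"
        using z Suc_aseq_aseq[OF m(1)] by simp
      with m show ?thesis by auto
    next
      case False
      with m aseq_Suc[of m] cseq_mem[of m] have "cseq k m = 2" "n = Suc (aseq k m)"
        by auto
      then have "cseq k n = 1"
        using cseq_Suc_aseq[OF m(1)] by simp
      with cn show ?thesis by simp
    qed
  qed
qed

end

section \<open>The game\<close>

lemma isP_iff_in_kernel:
  assumes stable: "\<And>x y p. (x, y) \<in> S \<Longrightarrow> p \<in> moves k x y \<Longrightarrow> p \<notin> S"
    and absorbing: "\<And>x y. (x, y) \<notin> S \<Longrightarrow> \<exists>p \<in> moves k x y. p \<in> S"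
  shows "isP k x y \<longleftrightarrow> (x, y) \<in> S"
proof (induction "x + y" arbitrary: x y rule: less_induct)
  case less
  have "isP k u v \<longleftrightarrow> (u, v) \<in> S" if "(u, v) \<in> moves k x y" for u v
    using less moves_decrease[OF that] by blast
  then have "isP k x y \<longleftrightarrow> (\<forall>p \<in> moves k x y. p \<notin> S)"
    by (subst isP.simps) auto
  then show ?case
    using stable absorbing by blast
qed

lemma moves_swap: "(u, v) \<in> moves k x y \<longleftrightarrow> (v, u) \<in> moves k y x"
  unfolding moves_def Tset_def by auto

lemma moves_vertical: "(x, y) \<notin> Tset k \<Longrightarrow> v < y \<Longrightarrow> (x, v) \<in> moves k x y"
  by (simp add: moves_def)

lemma moves_diagonal:
  "(x, y) \<notin> Tset k \<Longrightarrow> 1 \<le> t \<Longrightarrow> t \<le> x \<Longrightarrow> t \<le> y \<Longrightarrow> (x - t, y - t) \<in> moves k x y"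
  by (auto simp: moves_def)

lemma move_into_Tset:
  assumes not_T: "(x, y) \<notin> Tset k" and "x \<le> y" and "x \<le> k \<or> y - x \<le> k"
  shows "\<exists>p \<in> moves k x y. p \<in> Tset k"
  using assms(3)
proof
  assume "x \<le> k"
  with not_T have "(x, 0) \<in> moves k x y" "(x, 0) \<in> Tset k"
    by (auto simp: Tset_def intro: moves_vertical)
  then show ?thesis ..
next
  assume "y - x \<le> k"
  with assms have "1 \<le> x"
    by (auto simp: Tset_def)
  with assms(2) have "(x - x, y - x) \<in> moves k x y"
    using moves_diagonal[OF not_T] by blast
  moreover have "(x - x, y - x) \<in> Tset k"
    using \<open>y - x \<le> k\<close> by (simp add: Tset_def)
  ultimately show ?thesis ..
qed

definition Pset :: "nat \<Rightarrow> (nat \<times> nat) set" where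
  "Pset k = Tset k \<union> {(bseq k n, aseq k n) | n. n \<ge> 1} \<union> {(aseq k n, bseq k n) | n. n \<ge> 1}"

lemma Pset_swap: "(x, y) \<in> Pset k \<longleftrightarrow> (y, x) \<in> Pset k"
  unfolding Pset_def Tset_def by auto

context wythoff_variant
begin

lemma moves_from_pair_avoid_Pset:
  assumes n: "1 \<le> n" and move: "(u, v) \<in> moves k (aseq k n) (bseq k n)"
  shows "(u, v) \<notin> Pset k"
proof -
  have b_n: "bseq k n = aseq k n + k + n"
    using bseq_eq[OF n] .
  then have "(aseq k n, bseq k n) \<notin> Tset k"
    using aseq_gt[of k n] by (simp add: Tset_def)
  with move b_n consider
      (horizontal) "u < aseq k n" "v = bseq k n"
    | (vertical) "u = aseq k n" "v < bseq k n"
    | (diagonal) t where "1 \<le> t" "t \<le> aseq k n" "u = aseq k n - t" "v = bseq k n - t"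
    unfolding moves_def by auto
  then show ?thesis
  proof cases
    case horizontal
    have "(u, v) \<noteq> (aseq k m, bseq k m)" "(u, v) \<noteq> (bseq k m, aseq k m)" if "1 \<le> m" for m
      using horizontal bseq_eq_iff[OF that n] aseq_neq_bseq[OF that n] by auto
    moreover have "k < v"
      using horizontal b_n by simp
    ultimately show ?thesis
      unfolding Pset_def Tset_def by auto
  next
    case vertical
    have "(u, v) \<noteq> (aseq k m, bseq k m)" "(u, v) \<noteq> (bseq k m, aseq k m)" if "1 \<le> m" for m
      using vertical aseq_eq_iff[OF that n] aseq_neq_bseq[OF n that] by auto
    moreover have "k < u"
      using vertical aseq_gt[of k n] by simp
    ultimately show ?thesis
      unfolding Pset_def Tset_def by auto
  next
    case diagonal
    then have uv: "v = u + k + n" "u < aseq k n"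
      using b_n by auto
    have "(u, v) \<noteq> (aseq k m, bseq k m)" "(u, v) \<noteq> (bseq k m, aseq k m)" if "1 \<le> m" for m
      using uv bseq_eq[OF that] by auto
    moreover have "k < v"
      using uv n by simp
    ultimately show ?thesis
      unfolding Pset_def Tset_def by auto
  qed
qed

lemma Pset_stable:
  assumes "(x, y) \<in> Pset k" "p \<in> moves k x y"
  shows "p \<notin> Pset k"
proof -
  obtain u v where p: "p = (u, v)"
    by fastforce
  from assms(1) consider "(x, y) \<in> Tset k"
    | n where "1 \<le> n" "(x, y) = (bseq k n, aseq k n)"
    | n where "1 \<le> n" "(x, y) = (aseq k n, bseq k n)"
    unfolding Pset_def by auto
  then show ?thesis
  proof cases
    case 1
    with assms(2) show ?thesis
      by (simp add: moves_def)
  next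
    case (2 n)
    then have "(v, u) \<notin> Pset k"
      using assms(2) p moves_swap moves_from_pair_avoid_Pset by simp
    then show ?thesis
      using p Pset_swap by simp
  next
    case (3 n)
    then show ?thesis
      using assms(2) p moves_from_pair_avoid_Pset by simp
  qed
qed

lemma diagonal_move_onto_pair:
  assumes not_T: "(x, y) \<notin> Tset k" and m: "1 \<le> m" "x = aseq k m"
    and "k < y - x" "y < bseq k m"
  shows "\<exists>j\<ge>1. (aseq k j, bseq k j) \<in> moves k x y"
proof -
  \<comment> \<open>The target is the pair whose difference k + j is y - x.\<close>
  define j where "j = y - x - k"
  define t where "t = aseq k m - aseq k j"
  have j: "1 \<le> j" "j < m"
    using assms bseq_eq[OF m(1)] unfolding j_def by auto
  then have "aseq k j < aseq k m" "bseq k j = aseq k j + k + j"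
    using aseq_strict_mono bseq_eq by auto
  then have "(x - t, y - t) = (aseq k j, bseq k j)" "1 \<le> t" "t \<le> x" "t \<le> y"
    using m(2) \<open>k < y - x\<close> unfolding j_def t_def by auto
  with j(1) show ?thesis
    using moves_diagonal[OF not_T] by metis
qed

lemma move_onto_pair:
  assumes not_P: "(x, y) \<notin> Pset k" and xy: "x \<le> y" and "k < x" "k < y - x"
  shows "\<exists>p \<in> moves k x y. p \<in> Pset k"
proof -
  have not_T: "(x, y) \<notin> Tset k"
    using not_P unfolding Pset_def by auto
  obtain m where m: "1 \<le> m" "x = aseq k m \<or> x = bseq k m"
    using aseq_or_bseq \<open>k < x\<close> by blast
  have b_m: "bseq k m = aseq k m + k + m"
    using bseq_eq[OF m(1)] .
  from m(2) show ?thesis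
  proof
    assume x: "x = bseq k m"
    then have "(x, aseq k m) \<in> Pset k"
      using m(1) by (auto simp: Pset_def)
    moreover have "aseq k m < y"
      using x b_m xy m(1) by simp
    ultimately show ?thesis
      using moves_vertical[OF not_T] by blast
  next
    assume x: "x = aseq k m"
    then have partner: "(x, bseq k m) \<in> Pset k"
      using m(1) by (auto simp: Pset_def)
    with not_P have "y \<noteq> bseq k m"
      by auto
    then consider "bseq k m < y" | "y < bseq k m"
      by linarith
    then show ?thesis
    proof cases
      case 1
      with partner moves_vertical[OF not_T] show ?thesis
        by blast
    next
      case 2
      then obtain j where "1 \<le> j" "(aseq k j, bseq k j) \<in> moves k x y"
        using diagonal_move_onto_pair not_T m(1) x \<open>k < y - x\<close> by blast
      then show ?thesis
        by (auto simp: Pset_def)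
    qed
  qed
qed

lemma Pset_absorbing_le:
  assumes not_P: "(x, y) \<notin> Pset k" and xy: "x \<le> y"
  shows "\<exists>p \<in> moves k x y. p \<in> Pset k"
proof (cases "x \<le> k \<or> y - x \<le> k")
  case True
  have "(x, y) \<notin> Tset k"
    using not_P unfolding Pset_def by auto
  with True xy show ?thesis
    using move_into_Tset unfolding Pset_def by blast
next
  case False
  with assms show ?thesis
    using move_onto_pair by simp
qed

lemma Pset_absorbing:
  assumes "(x, y) \<notin> Pset k"
  shows "\<exists>p \<in> moves k x y. p \<in> Pset k"
proof (cases "x \<le> y")
  case True
  with assms show ?thesis
    by (rule Pset_absorbing_le)
next
  case False
  with assms Pset_swap Pset_absorbing_le[of y x] obtain u v
    where "(u, v) \<in> moves k y x" "(u, v) \<in> Pset k"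
    by force
  then show ?thesis
    using moves_swap Pset_swap by blast
qed

end

theorem theorem5p3:
  fixes k :: nat
  assumes "k \<ge> 1"
  shows "{(x, y). isP k x y} =
           Tset k \<union> {(bseq k n, aseq k n) | n. n \<ge> 1} \<union> {(aseq k n, bseq k n) | n. n \<ge> 1}"
proof -
  interpret wythoff_variant k
    using assms by unfold_locales
  have "isP k x y \<longleftrightarrow> (x, y) \<in> Pset k" for x y
    using isP_iff_in_kernel Pset_stable Pset_absorbing by blast
  then show ?thesis
    unfolding Pset_def by auto
qed

end
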